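(* If a natural number $n\ge2$ satisfies Robin's inequality $\sigma(n)<e^\gamma n\log(\log n)$, then $n$ satisfies the Kaneko–Lagarias inequality $\sigma(n)<\exp(H_n)\log(H_n)$ (and hence also the Lagarias inequality $\sigma(n)<H_n+\exp(H_n)\log(H_n)$).
   Context: $\sigma(n)=\sum_{d\mid n}d$ is the sum-of-divisors function, $H_n=1+\frac12+\cdots+\frac1n$ is the $n$-th harmonic number, and $\gamma$ is the Euler–Mascheroni constant. *)

theory Defs
  imports "HOL-Analysis.Analysis"
begin

definition divisor_sigma :: "nat \<Rightarrow> nat" where
  "divisor_sigma n = (\<Sum>d \<in> {d. d dvd n}. d)"

end

theory Submission
  imports Defs
begin

text \<open>Since \<open>H\<^sub>n - ln n\<close> decreases to \<open>\<gamma>\<close>, we have \<open>H\<^sub>n \<ge> \<gamma> + ln n\<close>, so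
  \<open>exp H\<^sub>n \<ge> e\<^sup>\<gamma> n\<close> and \<open>ln H\<^sub>n \<ge> ln (ln n)\<close>: Robin's bound is dominated termwise by the
  Kaneko--Lagarias bound, as soon as \<open>ln (ln n) \<ge> 0\<close>. That sign condition is forced by
  Robin's inequality itself, because \<open>\<sigma>(n) \<ge> 0\<close>.\<close>

lemma euler_mascheroni_le_harm_minus_ln:
  assumes "n > 0"
  shows "euler_mascheroni \<le> harm n - ln (real n)"
proof (rule LIMSEQ_le_const2[OF euler_mascheroni_LIMSEQ])
  show "\<exists>N. \<forall>m\<ge>N. harm m - ln (real m) \<le> harm n - ln (real n)"
    using euler_mascheroni_sequence_decreasing[OF assms] by blast
qed

lemma exp_euler_mascheroni_mult_le_exp_harm:
  assumes "n > 0"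
  shows "exp euler_mascheroni * real n \<le> exp (harm n)"
proof -
  have "exp euler_mascheroni * real n = exp (euler_mascheroni + ln (real n))"
    using assms by (simp add: exp_add)
  also have "\<dots> \<le> exp (harm n)"
    using euler_mascheroni_le_harm_minus_ln[OF assms] by simp
  finally show ?thesis .
qed

lemma ln_le_harm_real: "ln (real n) \<le> (harm n :: real)"
proof (cases "n = 0")
  case False
  then have "ln (real n) \<le> ln (real n + 1)" by simp
  also have "\<dots> \<le> harm n" by (rule ln_le_harm)
  finally show ?thesis .
qed (simp add: harm_nonneg)

lemma robin_bound_le_kaneko_lagarias_bound:
  assumes "exp 1 \<le> real n"
  shows "exp euler_mascheroni * real n * ln (ln (real n)) \<le> exp (harm n) * ln (harm n :: real)"
proof -
  have "n > 0" using assms exp_gt_zero[of 1] by linarith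
  have ln_n_ge_1: "1 \<le> ln (real n)"
    using assms by (metis exp_gt_zero ln_exp ln_le_cancel_iff order_less_le_trans)
  have "ln (ln (real n)) \<le> ln (harm n)"
    using ln_n_ge_1 ln_le_harm_real[of n] by (intro ln_mono) auto
  moreover have "0 \<le> ln (ln (real n))"
    using ln_n_ge_1 by simp
  ultimately show ?thesis
    using exp_euler_mascheroni_mult_le_exp_harm[OF \<open>n > 0\<close>] \<open>n > 0\<close>
    by (intro mult_mono) auto
qed

theorem mainTheorem20:
  fixes n :: nat
  assumes "n \<ge> 2"
    and "real (divisor_sigma n) < exp euler_mascheroni * real n * ln (ln (real n))"
  shows "real (divisor_sigma n) < exp (harm n) * ln (harm n :: real)
         \<and> real (divisor_sigma n) < harm n + exp (harm n) * ln (harm n :: real)"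
proof -
  have "0 < exp euler_mascheroni * real n * ln (ln (real n))"
    using assms(2) by (smt (verit) of_nat_0_le_iff)
  moreover have "0 < exp euler_mascheroni * real n"
    using assms(1) by simp
  ultimately have "0 < ln (ln (real n))"
    by (rule zero_less_mult_pos)
  moreover have "0 < ln (real n)"
    using assms(1) by simp
  ultimately have "1 < ln (real n)"
    by (simp add: ln_gt_zero_iff)
  then have "exp 1 \<le> real n"
    using assms(1)
    by (metis exp_less_cancel_iff exp_ln less_imp_le of_nat_0_less_iff pos2 order_less_le_trans)
  then have "real (divisor_sigma n) < exp (harm n) * ln (harm n :: real)"
    using assms(2) robin_bound_le_kaneko_lagarias_bound by fastforce
  moreover have "(0::real) \<le> harm n" by (rule harm_nonneg)
  ultimately show ?thesis by linarith
qed

end
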